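(* Let $n\ge 2$ and $k=2$. For any storage network with node set $\mathcal{N}=\{1,\dots,n\}$ and symmetric RTT function $\tau$, there exists an uncoded storage scheme $\mathcal{C}$ such that $L_{max}^{(i)}(\mathcal{C})=\lambda_{1}^{(i)}$ for every $i\in\mathcal{N}$ and $L_{avg}(\mathcal{C})=\frac{1}{2n}\sum_{i\in\mathcal{N}}\left(\lambda_0^{(i)}+\lambda_1^{(i)}\right)$; that is, $\mathcal{C}$ meets the lower bounds $L_{max}^{(i)}\ge\lambda_{k-1}^{(i)}$ and $L_{avg}\ge\frac{1}{kn}\sum_i\sum_{j=0}^{k-1}\lambda_j^{(i)}$, valid for all linear storage codes, with equality.
   Context: A storage network consists of $n$ nodes $\mathcal{N}=\{1,\dots,n\}$ and a round-trip-time function $\tau:\mathcal{N}\times\mathcal{N}\to\mathbb{R}_{\ge0}$ with $\tau(i,j)=\tau(j,i)$, $\tau(i,i)=0$, and $k$ information files $W_1,\dots,W_k$. An uncoded storage scheme stores at node $i$ one file $X_i=W_{\sigma(i)}$ for a map $\sigma:\mathcal{N}\to[k]$. The latency $l_j^{(i)}$ of node $i$ for file $W_j$ is $\min\{\tau(t,i): \sigma(t)=j\}$ (the least wait time after which some node storing $W_j$ is reachable). $L_{max}^{(i)}(\mathcal{C})=\max_{j\in[k]}l_j^{(i)}$ and $L_{avg}(\mathcal{C})=\frac{1}{kn}\sum_{i\in\mathcal{N}}\sum_{j\in[k]}l_j^{(i)}$. For node $i$, $\lambda_0^{(i)}\le\dots\le\lambda_{n-1}^{(i)}$ is the sorted list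 of $\{\tau(j,i):j\in\mathcal{N}\}$, so $\lambda_0^{(i)}=0$. *)

theory Defs
  imports "HOL-Analysis.Analysis"
begin

text \<open>Nodes are {1..n}; files are indexed by {1..k}. An uncoded storage scheme is
a map sigma from nodes to file indices.\<close>

definition uncoded_scheme :: "nat \<Rightarrow> nat \<Rightarrow> (nat \<Rightarrow> nat) \<Rightarrow> bool" where
  "uncoded_scheme n k \<sigma> \<longleftrightarrow> (\<forall>i\<in>{1..n}. \<sigma> i \<in> {1..k})"

definition latency :: "nat \<Rightarrow> (nat \<Rightarrow> nat \<Rightarrow> real) \<Rightarrow> (nat \<Rightarrow> nat) \<Rightarrow> nat \<Rightarrow> nat \<Rightarrow> real" where
  "latency n \<tau> \<sigma> j i = Min {\<tau> t i | t. t \<in> {1..n} \<and> \<sigma> t = j}"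

definition L_max :: "nat \<Rightarrow> nat \<Rightarrow> (nat \<Rightarrow> nat \<Rightarrow> real) \<Rightarrow> (nat \<Rightarrow> nat) \<Rightarrow> nat \<Rightarrow> real" where
  "L_max n k \<tau> \<sigma> i = Max ((\<lambda>j. latency n \<tau> \<sigma> j i) ` {1..k})"

definition L_avg :: "nat \<Rightarrow> nat \<Rightarrow> (nat \<Rightarrow> nat \<Rightarrow> real) \<Rightarrow> (nat \<Rightarrow> nat) \<Rightarrow> real" where
  "L_avg n k \<tau> \<sigma> = (\<Sum>i\<in>{1..n}. \<Sum>j\<in>{1..k}. latency n \<tau> \<sigma> j i) / (real k * real n)"

text \<open>lam n tau i m: the m-th smallest (0-indexed) element of the list of
tau(j,i), j = 1..n, with multiplicity.\<close>
definition lam :: "nat \<Rightarrow> (nat \<Rightarrow> nat \<Rightarrow> real) \<Rightarrow> nat \<Rightarrow> nat \<Rightarrow> real" where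
  "lam n \<tau> i m = sort (map (\<lambda>j. \<tau> j i) [1..<n+1]) ! m"

end

theory Submission
  imports Defs
begin

text \<open>
  A node has latency \<open>0 = \<lambda>\<^sub>0\<close> for the file it stores itself and latency at least
  \<open>\<lambda>\<^sub>1\<close> for the other file. Both bounds are attained if the nodes are 2-coloured (one
  colour per file) so that every node has a nearest other node of the opposite colour.

  Such a colouring exists for every symmetric distance on a finite set, by induction on the
  number of nodes. Call i a dependent of v if v is the unique nearest neighbour of i. If some
  node v has no dependents, colour the other nodes first: each of them has a nearest neighbour
  other than v, so its nearest neighbours without v are still nearest neighbours with v, and v
  takes the colour opposite to one of its own nearest neighbours. Otherwise the dependent map
  is injective, hence a permutation of the nodes, and a closest pair {a, b} is one of its
  2-cycles: b is a nearest neighbour and the only dependent of a, so a can be removed and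
  coloured opposite to b.
\<close>

definition nearest :: "'a set \<Rightarrow> ('a \<Rightarrow> 'a \<Rightarrow> 'b::linorder) \<Rightarrow> 'a \<Rightarrow> 'a \<Rightarrow> bool" where
  "nearest V d i j \<longleftrightarrow> i \<in> V \<and> j \<in> V \<and> j \<noteq> i \<and> (\<forall>k\<in>V. k \<noteq> i \<longrightarrow> d j i \<le> d k i)"

definition sole_nearest :: "'a set \<Rightarrow> ('a \<Rightarrow> 'a \<Rightarrow> 'b::linorder) \<Rightarrow> 'a \<Rightarrow> 'a \<Rightarrow> bool" where
  "sole_nearest V d i j \<longleftrightarrow> nearest V d i j \<and> (\<forall>j'. nearest V d i j' \<longrightarrow> j' = j)"

definition nearest_alternating :: "'a set \<Rightarrow> ('a \<Rightarrow> 'a \<Rightarrow> 'b::linorder) \<Rightarrow> ('a \<Rightarrow> bool) \<Rightarrow> bool" where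
  "nearest_alternating V d \<sigma> \<longleftrightarrow>
     (\<forall>i\<in>V. V - {i} \<noteq> {} \<longrightarrow> (\<exists>j. nearest V d i j \<and> \<sigma> j \<noteq> \<sigma> i))"

lemma nearest_exists:
  assumes "finite V" "i \<in> V" "V - {i} \<noteq> {}"
  obtains j where "nearest V d i j"
proof -
  obtain j where "is_arg_min (\<lambda>k. d k i) (\<lambda>k. k \<in> V - {i}) j"
    using ex_is_arg_min_if_finite[of "V - {i}"] assms by blast
  then show thesis
    using that assms(2) unfolding nearest_def is_arg_min_linorder by blast
qed

lemma mutual_nearest_exists:
  assumes "finite V" "a \<in> V" "b \<in> V" "a \<noteq> b" and sym: "\<forall>x\<in>V. \<forall>y\<in>V. d x y = d y x"
  obtains x y where "nearest V d x y" "nearest V d y x"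
proof -
  obtain p where p: "is_arg_min (\<lambda>(x, y). d x y) (\<lambda>p. p \<in> {(x, y) \<in> V \<times> V. x \<noteq> y}) p"
    using ex_is_arg_min_if_finite[of "{(x, y) \<in> V \<times> V. x \<noteq> y}" "\<lambda>(x, y). d x y"] assms
    by (force intro: finite_subset[of _ "V \<times> V"])
  obtain x y where xy: "p = (x, y)" by fastforce
  have min: "d x y \<le> d u w" if "u \<in> V" "w \<in> V" "u \<noteq> w" for u w
    using p that unfolding xy is_arg_min_linorder by auto
  have "x \<in> V" "y \<in> V" "x \<noteq> y"
    using p unfolding xy is_arg_min_linorder by auto
  with min sym have "nearest V d x y" "nearest V d y x"
    unfolding nearest_def by (metis (no_types, lifting))+
  with that show thesis .
qed

lemma sole_nearest_unique:
  "sole_nearest V d i v \<Longrightarrow> sole_nearest V d i w \<Longrightarrow> v = w"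
  unfolding sole_nearest_def by blast

lemma nearest_Diff_singleton:
  assumes "nearest V d i j" "j \<noteq> v" "nearest (V - {v}) d i j'"
  shows "nearest V d i j'"
proof -
  have "j \<in> V - {v}" "j \<noteq> i"
    using assms(1,2) by (simp_all add: nearest_def)
  then have "d j' i \<le> d j i"
    using assms(3) unfolding nearest_def by blast
  then show ?thesis
    using assms unfolding nearest_def by (auto intro: order.trans)
qed

lemma sole_nearest_surj:
  assumes "finite V" and g: "\<forall>v\<in>V. sole_nearest V d (g v) v"
  shows "g ` V = V"
proof (rule endo_inj_surj[OF \<open>finite V\<close>])
  show "g ` V \<subseteq> V"
    using g unfolding sole_nearest_def nearest_def by blast
  show "inj_on g V"
    by (metis g inj_onI sole_nearest_unique)
qed

lemma sole_nearest_eq_inverse: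
  assumes "finite V" and g: "\<forall>v\<in>V. sole_nearest V d (g v) v" and "sole_nearest V d i v"
  shows "i = g v"
proof -
  from assms(3) have "i \<in> g ` V"
    unfolding sole_nearest_surj[OF assms(1) g] sole_nearest_def nearest_def by blast
  then obtain w where "w \<in> V" "i = g w"
    by blast
  with g have "sole_nearest V d i w"
    by blast
  with assms(3) have "v = w"
    by (rule sole_nearest_unique)
  with \<open>i = g w\<close> show ?thesis
    by simp
qed

lemma nearest_alternating_fun_upd:
  assumes "finite V" and alt: "nearest_alternating (V - {v}) d \<sigma>"
    and dependents: "\<forall>i. sole_nearest V d i v \<longrightarrow> \<sigma> i \<noteq> c"
    and own: "V - {v} \<noteq> {} \<Longrightarrow> \<exists>j. nearest V d v j \<and> \<sigma> j \<noteq> c"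
  shows "nearest_alternating V d (\<sigma>(v := c))"
  unfolding nearest_alternating_def
proof (intro ballI impI)
  fix i assume "i \<in> V" "V - {i} \<noteq> {}"
  show "\<exists>j. nearest V d i j \<and> (\<sigma>(v := c)) j \<noteq> (\<sigma>(v := c)) i"
  proof (cases "i = v")
    case True
    with own \<open>V - {i} \<noteq> {}\<close> show ?thesis
      unfolding nearest_def by fastforce
  next
    case False
    show ?thesis
    proof (cases "sole_nearest V d i v")
      case True
      with dependents False show ?thesis
        unfolding sole_nearest_def by auto
    next
      case False
      obtain j where "nearest V d i j" "j \<noteq> v"
      proof -
        obtain j where "nearest V d i j"
          using nearest_exists \<open>finite V\<close> \<open>i \<in> V\<close> \<open>V - {i} \<noteq> {}\<close> by metis
        with False that show thesis
          unfolding sole_nearest_def by blast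
      qed
      then have "i \<in> V - {v}" "V - {v} - {i} \<noteq> {}"
        unfolding nearest_def using \<open>i \<noteq> v\<close> by auto
      with alt obtain j' where "nearest (V - {v}) d i j'" "\<sigma> j' \<noteq> \<sigma> i"
        unfolding nearest_alternating_def by blast
      moreover from this(1) have "j' \<noteq> v"
        by (simp add: nearest_def)
      ultimately show ?thesis
        using nearest_Diff_singleton[OF \<open>nearest V d i j\<close> \<open>j \<noteq> v\<close>] \<open>i \<noteq> v\<close> by auto
    qed
  qed
qed

lemma nearest_with_unique_dependent:
  assumes "finite V" "V \<noteq> {}" and sym: "\<forall>x\<in>V. \<forall>y\<in>V. d x y = d y x"
    and dependent: "\<forall>v\<in>V. \<exists>i. sole_nearest V d i v"
  obtains a b where "nearest V d a b" "\<forall>i. sole_nearest V d i a \<longrightarrow> i = b"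
proof -
  obtain g where g: "\<forall>v\<in>V. sole_nearest V d (g v) v"
    using bchoice[OF dependent] by blast
  have surj: "g ` V = V"
    using sole_nearest_surj[OF \<open>finite V\<close> g] .
  obtain v where "v \<in> V"
    using \<open>V \<noteq> {}\<close> by blast
  with g have "nearest V d (g v) v"
    unfolding sole_nearest_def by blast
  then have "g v \<in> V" "v \<noteq> g v"
    unfolding nearest_def by simp_all
  then obtain a b where ab: "nearest V d a b" "nearest V d b a"
    using mutual_nearest_exists[OF \<open>finite V\<close> \<open>v \<in> V\<close> _ _ sym] by blast
  have "b = g a"
  proof -
    from ab(2) have "b \<in> g ` V"
      unfolding surj nearest_def by blast
    then obtain w where "w \<in> V" "b = g w"
      by blast
    with g have "sole_nearest V d b w"
      by blast
    with ab(2) have "a = w"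
      unfolding sole_nearest_def by blast
    with \<open>b = g w\<close> show ?thesis
      by simp
  qed
  then have "\<forall>i. sole_nearest V d i a \<longrightarrow> i = b"
    by (auto dest: sole_nearest_eq_inverse[OF \<open>finite V\<close> g])
  with ab(1) show thesis
    by (rule that)
qed

lemma nearest_alternating_exists:
  fixes d :: "'a \<Rightarrow> 'a \<Rightarrow> 'b::linorder"
  assumes "finite V" and sym: "\<forall>x\<in>V. \<forall>y\<in>V. d x y = d y x"
  shows "\<exists>\<sigma>. nearest_alternating V d \<sigma>"
  using assms(1)
proof (induction rule: finite_remove_induct)
  case empty
  show ?case
    unfolding nearest_alternating_def by blast
next
  case (remove A)
  have sym_A: "\<forall>x\<in>A. \<forall>y\<in>A. d x y = d y x"
    using sym \<open>A \<subseteq> V\<close> by blast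
  consider (free) v where "v \<in> A" "\<forall>i. \<not> sole_nearest A d i v"
    | (dependent) "\<forall>v\<in>A. \<exists>i. sole_nearest A d i v"
    by blast
  then show ?case
  proof cases
    case free
    obtain \<sigma> where \<sigma>: "nearest_alternating (A - {v}) d \<sigma>"
      using remove.IH[OF \<open>v \<in> A\<close>] by blast
    obtain c where "A - {v} \<noteq> {} \<Longrightarrow> \<exists>j. nearest A d v j \<and> \<sigma> j \<noteq> c"
    proof (cases "A - {v} = {}")
      case False
      then obtain w where "nearest A d v w"
        using nearest_exists[OF \<open>finite A\<close> \<open>v \<in> A\<close>] by blast
      then show thesis
        using that[of "\<not> \<sigma> w"] by blast
    qed blast
    then show ?thesis
      using nearest_alternating_fun_upd[OF \<open>finite A\<close> \<sigma>] free(2) by blast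
  next
    case dependent
    obtain a b where ab: "nearest A d a b" "\<forall>i. sole_nearest A d i a \<longrightarrow> i = b"
      using nearest_with_unique_dependent[OF \<open>finite A\<close> \<open>A \<noteq> {}\<close> sym_A dependent] .
    then have "a \<in> A"
      unfolding nearest_def by blast
    then obtain \<sigma> where \<sigma>: "nearest_alternating (A - {a}) d \<sigma>"
      using remove.IH by blast
    have "\<forall>i. sole_nearest A d i a \<longrightarrow> \<sigma> i \<noteq> (\<not> \<sigma> b)"
      using ab(2) by blast
    then show ?thesis
      using nearest_alternating_fun_upd[OF \<open>finite A\<close> \<sigma>] ab(1) by blast
  qed
qed

lemma sort_map_nth_0_1:
  fixes f :: "'a \<Rightarrow> 'b::linorder"
  assumes "distinct xs" "i \<in> set xs" "j \<in> set xs" "j \<noteq> i"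
    and i_min: "\<forall>x\<in>set xs. f i \<le> f x" and j_min: "\<forall>x\<in>set xs. x \<noteq> i \<longrightarrow> f j \<le> f x"
  shows "sort (map f xs) ! 0 = f i" "sort (map f xs) ! 1 = f j"
proof -
  define rest where "rest = remove1 j (remove1 i xs)"
  have "j \<in> set (remove1 i xs)"
    using assms(3,4) by simp
  then have "j \<in># mset (remove1 i xs)"
    by (simp only: set_mset_mset)
  then have "mset (remove1 i xs) = add_mset j (mset rest)"
    unfolding rest_def mset_remove1[of j] by (rule insert_DiffM[symmetric])
  moreover have "mset xs = add_mset i (mset (remove1 i xs))"
    using assms(2) by simp
  ultimately have "mset xs = add_mset i (add_mset j (mset rest))"
    by (simp only:)
  then have "mset (f i # f j # sort (map f rest)) = mset (map f xs)"
    by simp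
  moreover have "set rest \<subseteq> set xs - {i}"
    using \<open>distinct xs\<close> unfolding rest_def by (auto dest: in_set_remove1)
  then have "sorted (f i # f j # sort (map f rest))"
    using i_min j_min assms(3) by auto
  ultimately have "sort (map f xs) = f i # f j # sort (map f rest)"
    by (rule properties_for_sort)
  then show "sort (map f xs) ! 0 = f i" "sort (map f xs) ! 1 = f j"
    by simp_all
qed

lemma lam_nearest:
  assumes "\<tau> i i = 0" "\<forall>t\<in>{1..n}. 0 \<le> \<tau> t i" "nearest {1..n} \<tau> i j"
  shows "lam n \<tau> i 0 = 0" "lam n \<tau> i 1 = \<tau> j i"
proof -
  have "i \<in> set [1..<n+1]" "j \<in> set [1..<n+1]" "j \<noteq> i"
    "\<forall>t\<in>set [1..<n+1]. t \<noteq> i \<longrightarrow> \<tau> j i \<le> \<tau> t i"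
    using assms(3) unfolding nearest_def by auto
  with assms(1,2) show "lam n \<tau> i 0 = 0" "lam n \<tau> i 1 = \<tau> j i"
    unfolding lam_def using sort_map_nth_0_1[of "[1..<n+1]" i j "\<lambda>t. \<tau> t i"] by auto
qed

lemma latency_eqI:
  assumes "j \<in> {1..n}" "\<sigma> j = c" "\<forall>t\<in>{1..n}. \<sigma> t = c \<longrightarrow> \<tau> j i \<le> \<tau> t i"
  shows "latency n \<tau> \<sigma> c i = \<tau> j i"
  unfolding latency_def using assms by (intro Min_eqI) auto

definition scheme_of_colouring :: "(nat \<Rightarrow> bool) \<Rightarrow> nat \<Rightarrow> nat" where
  "scheme_of_colouring \<sigma> t = (if \<sigma> t then 1 else 2)"

lemma scheme_of_colouring_range:
  "\<sigma> j \<noteq> \<sigma> i \<Longrightarrow> {scheme_of_colouring \<sigma> i, scheme_of_colouring \<sigma> j} = {1..2}"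
  unfolding scheme_of_colouring_def by auto

lemma scheme_of_colouring_latencies:
  assumes "\<tau> i i = 0" "\<forall>t\<in>{1..n}. 0 \<le> \<tau> t i" "nearest {1..n} \<tau> i j" "\<sigma> j \<noteq> \<sigma> i"
  defines "s \<equiv> scheme_of_colouring \<sigma>"
  shows "Max ((\<lambda>c. latency n \<tau> s c i) ` {1..2}) = lam n \<tau> i 1"
    and "(\<Sum>c\<in>{1..2}. latency n \<tau> s c i) = lam n \<tau> i 0 + lam n \<tau> i 1"
proof -
  have j: "j \<in> {1..n}" "\<forall>t\<in>{1..n}. t \<noteq> i \<longrightarrow> \<tau> j i \<le> \<tau> t i"
    using assms(3) unfolding nearest_def by auto
  have "i \<in> {1..n}"
    using assms(3) unfolding nearest_def by blast
  with assms(1,2) have own: "latency n \<tau> s (s i) i = lam n \<tau> i 0"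
    using lam_nearest(1)[OF assms(1-3)] by (simp add: latency_eqI)
  have "s t = s j \<Longrightarrow> t \<noteq> i" for t
    using assms(4) unfolding s_def scheme_of_colouring_def by (auto split: if_splits)
  with j have other: "latency n \<tau> s (s j) i = lam n \<tau> i 1"
    using lam_nearest(2)[OF assms(1-3)] by (simp add: latency_eqI)
  have files: "{1..2} = {s i, s j}" "s i \<noteq> s j"
    using scheme_of_colouring_range[OF assms(4)] assms(4)
    unfolding s_def scheme_of_colouring_def by auto
  have "lam n \<tau> i 0 \<le> lam n \<tau> i 1"
    using lam_nearest[OF assms(1-3)] assms(2) j(1) by simp
  with own other files show "Max ((\<lambda>c. latency n \<tau> s c i) ` {1..2}) = lam n \<tau> i 1"
    by (simp add: max_def)
  from own other files show "(\<Sum>c\<in>{1..2}. latency n \<tau> s c i) = lam n \<tau> i 0 + lam n \<tau> i 1"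
    by simp
qed

lemma L_max_L_avg_scheme_of_colouring:
  assumes "\<forall>i\<in>{1..n}. \<forall>j\<in>{1..n}. \<tau> i j \<ge> 0" "\<forall>i\<in>{1..n}. \<tau> i i = 0"
    and partner: "\<And>i. i \<in> {1..n} \<Longrightarrow> \<exists>j. nearest {1..n} \<tau> i j \<and> \<sigma> j \<noteq> \<sigma> i"
  defines "s \<equiv> scheme_of_colouring \<sigma>"
  shows "\<forall>i\<in>{1..n}. L_max n 2 \<tau> s i = lam n \<tau> i 1"
    and "L_avg n 2 \<tau> s = (\<Sum>i\<in>{1..n}. lam n \<tau> i 0 + lam n \<tau> i 1) / (2 * real n)"
proof -
  have "Max ((\<lambda>c. latency n \<tau> s c i) ` {1..2}) = lam n \<tau> i 1
      \<and> (\<Sum>c\<in>{1..2}. latency n \<tau> s c i) = lam n \<tau> i 0 + lam n \<tau> i 1"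
    if i: "i \<in> {1..n}" for i
  proof -
    obtain j where j: "nearest {1..n} \<tau> i j" "\<sigma> j \<noteq> \<sigma> i"
      using partner[OF i] by blast
    have "\<tau> i i = 0" "\<forall>t\<in>{1..n}. 0 \<le> \<tau> t i"
      using assms(1,2) i by auto
    from scheme_of_colouring_latencies[OF this j] show ?thesis
      unfolding s_def ..
  qed
  then show "\<forall>i\<in>{1..n}. L_max n 2 \<tau> s i = lam n \<tau> i 1"
    and "L_avg n 2 \<tau> s = (\<Sum>i\<in>{1..n}. lam n \<tau> i 0 + lam n \<tau> i 1) / (2 * real n)"
    unfolding L_max_def L_avg_def by simp_all
qed

theorem corollary1:
  fixes n :: nat and \<tau> :: "nat \<Rightarrow> nat \<Rightarrow> real"
  assumes "n \<ge> 2"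
    and "\<forall>i\<in>{1..n}. \<forall>j\<in>{1..n}. \<tau> i j \<ge> 0"
    and "\<forall>i\<in>{1..n}. \<forall>j\<in>{1..n}. \<tau> i j = \<tau> j i"
    and "\<forall>i\<in>{1..n}. \<tau> i i = 0"
  shows "\<exists>\<sigma>. uncoded_scheme n 2 \<sigma>
           \<and> (\<forall>j\<in>{1..2}. \<exists>t\<in>{1..n}. \<sigma> t = j)
           \<and> (\<forall>i\<in>{1..n}. L_max n 2 \<tau> \<sigma> i = lam n \<tau> i 1)
           \<and> L_avg n 2 \<tau> \<sigma> = (\<Sum>i\<in>{1..n}. lam n \<tau> i 0 + lam n \<tau> i 1) / (2 * real n)"
proof -
  obtain \<sigma> where "nearest_alternating {1..n} \<tau> \<sigma>"
    using nearest_alternating_exists[of "{1..n}" \<tau>] assms(3) by blast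
  moreover have "(if i = 1 then 2 else 1) \<in> {1..n} - {i}" for i :: nat
    using assms(1) by auto
  ultimately have partner: "\<exists>j. nearest {1..n} \<tau> i j \<and> \<sigma> j \<noteq> \<sigma> i" if "i \<in> {1..n}" for i
    using that unfolding nearest_alternating_def by (metis empty_iff)
  show ?thesis
  proof (intro exI[of _ "scheme_of_colouring \<sigma>"] conjI)
    show "uncoded_scheme n 2 (scheme_of_colouring \<sigma>)"
      unfolding uncoded_scheme_def scheme_of_colouring_def by auto
    have "1 \<in> {1..n}"
      using assms(1) by simp
    then obtain j where "nearest {1..n} \<tau> 1 j" "\<sigma> j \<noteq> \<sigma> 1"
      using partner by blast
    then have "{1, j} \<subseteq> {1..n}" and range: "{1..2} = scheme_of_colouring \<sigma> ` {1, j}"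
      using scheme_of_colouring_range[of \<sigma> j 1] unfolding nearest_def by auto
    then show "\<forall>c\<in>{1..2}. \<exists>t\<in>{1..n}. scheme_of_colouring \<sigma> t = c"
      unfolding range by blast
    show "\<forall>i\<in>{1..n}. L_max n 2 \<tau> (scheme_of_colouring \<sigma>) i = lam n \<tau> i 1"
      and "L_avg n 2 \<tau> (scheme_of_colouring \<sigma>)
             = (\<Sum>i\<in>{1..n}. lam n \<tau> i 0 + lam n \<tau> i 1) / (2 * real n)"
      using L_max_L_avg_scheme_of_colouring[OF assms(2,4) partner] by blast+
  qed
qed

end
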